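(* Let $\theta\geq 0$ be real. If $p$ is a projector over $A(\mathbb{R}^2_\theta)$, i.e. $p\in M_n(A(\mathbb{R}^2_\theta))$ for some $n$ with $p^2=p=p^*$, then every entry of $p$ is a scalar multiple of the identity, i.e. $p$ is a projector in $M_n(\mathbb{C})$.
   Context: $A(\mathbb{R}^2_\theta)$ is the unital $*$-algebra generated by two self-adjoint elements $x,y$ with $[x,y]=xy-yx=-i\theta$; every element can be written uniquely as a finite sum $\sum a_{p,q}x^py^q$ with $a_{p,q}\in\mathbb{C}$ (ordered monomials linearly independent), and $\mathbb{C}$ is identified with the scalar multiples of $1$. *)

theory Defs
  imports Complex_Main
begin

text \<open>Concrete model of A(R^2_theta): an element sum a(p,q) x^p y^q is represented by
its coefficient function a :: nat => nat => complex (coefficient of the ordered monomial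
x^p y^q), required to be finitely supported.  Since [x,y] = -i theta, we have
y x = x y + i theta, and the normal-ordering rule
  y^q x^r = sum_k k! (q choose k) (r choose k) (i theta)^k x^(r-k) y^(q-k).\<close>

type_synonym elt = "nat \<Rightarrow> nat \<Rightarrow> complex"

definition supp :: "elt \<Rightarrow> (nat \<times> nat) set" where
  "supp a = {(p, q). a p q \<noteq> 0}"

definition is_elt :: "elt \<Rightarrow> bool" where
  "is_elt a \<longleftrightarrow> finite (supp a)"

definition scalar :: "complex \<Rightarrow> elt" where
  "scalar c = (\<lambda>p q. if p = 0 \<and> q = 0 then c else 0)"

definition reord_coef :: "real \<Rightarrow> nat \<Rightarrow> nat \<Rightarrow> nat \<Rightarrow> complex" where
  "reord_coef \<theta> q r k = of_nat (fact k * (q choose k) * (r choose k)) * (\<i> * of_real \<theta>) ^ k"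

text \<open>Product: (x^p y^q)(x^r y^s) = x^p (y^q x^r) y^s.\<close>
definition amul :: "real \<Rightarrow> elt \<Rightarrow> elt \<Rightarrow> elt" where
  "amul \<theta> a b = (\<lambda>m n.
     \<Sum>(p, q)\<in>supp a. \<Sum>(r, s)\<in>supp b. \<Sum>k\<le>min q r.
       if p + r - k = m \<and> q + s - k = n
       then a p q * b r s * reord_coef \<theta> q r k else 0)"

text \<open>Involution: (c x^p y^q)^* = conj(c) y^q x^p (x, y self-adjoint).\<close>
definition astar :: "real \<Rightarrow> elt \<Rightarrow> elt" where
  "astar \<theta> a = (\<lambda>m n.
     \<Sum>(p, q)\<in>supp a. \<Sum>k\<le>min q p.
       if p - k = m \<and> q - k = n then cnj (a p q) * reord_coef \<theta> q p k else 0)"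

definition is_projector :: "real \<Rightarrow> nat \<Rightarrow> (nat \<Rightarrow> nat \<Rightarrow> elt) \<Rightarrow> bool" where
  "is_projector \<theta> n P \<longleftrightarrow>
     (\<forall>i<n. \<forall>j<n. is_elt (P i j)) \<and>
     (\<forall>i<n. \<forall>j<n. (\<lambda>m k. \<Sum>l<n. amul \<theta> (P i l) (P l j) m k) = P i j) \<and>
     (\<forall>i<n. \<forall>j<n. astar \<theta> (P j i) = P i j)"

end

theory Submission
  imports Defs "HOL-Library.Product_Lexorder"
begin

text \<open>Order the monomials x^p y^q lexicographically by (p, q). Normal ordering
y^q x^r produces x^r y^q plus strictly lower monomials, so the leading coefficient of a
product is the product of the leading coefficients, and the leading coefficient of a^*
is the conjugate of that of a. If m is the largest monomial occurring in an entry of the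
projector P, say in column i, then the coefficient of m^2 in (P^2)_ii = P_ii is
sum_l |P_li(m)|^2 > 0, so m^2 <= m and m = 1: every entry is a scalar.
The argument works for every real theta.\<close>

lemma reord_coef_0 [simp]: "reord_coef \<theta> q r 0 = 1"
  by (simp add: reord_coef_def)

lemma scalar_if_supp_subset:
  assumes "supp a \<subseteq> {(0, 0)}"
  shows "a = scalar (a 0 0)"
  using assms by (fastforce simp: scalar_def supp_def)

lemma astar_leading_coeff:
  assumes "is_elt a" and "supp a \<subseteq> {..(m1, m2)}"
  shows "astar \<theta> a m1 m2 = cnj (a m1 m2)"
proof -
  have term_eq: "(\<Sum>k\<le>min q p. if p - k = m1 \<and> q - k = m2
        then cnj (a p q) * reord_coef \<theta> q p k else 0)
      = (if (p, q) = (m1, m2) then cnj (a m1 m2) else 0)"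
    if "(p, q) \<in> supp a" for p q
  proof -
    have "(p, q) \<le> (m1, m2)" using that assms(2) by blast
    then have "(\<Sum>k\<le>min q p. if p - k = m1 \<and> q - k = m2
        then cnj (a p q) * reord_coef \<theta> q p k else 0)
      = (\<Sum>k\<le>min q p. if k = 0 then (if (p, q) = (m1, m2) then cnj (a m1 m2) else 0) else 0)"
      by (intro sum.cong) auto
    then show ?thesis by (simp add: sum.delta)
  qed
  have "astar \<theta> a m1 m2
      = (\<Sum>x\<in>supp a. if x = (m1, m2) then cnj (a m1 m2) else 0)"
    unfolding astar_def by (intro sum.cong refl) (clarsimp simp only: prod.case term_eq)
  also have "\<dots> = cnj (a m1 m2)"
    using assms(1) by (auto simp: is_elt_def supp_def)
  finally show ?thesis .
qed

lemma amul_leading_coeff: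
  assumes "is_elt a" "is_elt b"
    and "supp a \<subseteq> {..(m1, m2)}" "supp b \<subseteq> {..(r1, r2)}"
  shows "amul \<theta> a b (m1 + r1) (m2 + r2) = a m1 m2 * b r1 r2"
proof -
  have term_eq: "(\<Sum>k\<le>min q r. if p + r - k = m1 + r1 \<and> q + s - k = m2 + r2
        then a p q * b r s * reord_coef \<theta> q r k else 0)
      = (if (p, q) = (m1, m2) \<and> (r, s) = (r1, r2) then a m1 m2 * b r1 r2 else 0)"
    if "(p, q) \<in> supp a" "(r, s) \<in> supp b" for p q r s
  proof -
    have "(p, q) \<le> (m1, m2)" "(r, s) \<le> (r1, r2)" using that assms(3,4) by blast+
    then have "(\<Sum>k\<le>min q r. if p + r - k = m1 + r1 \<and> q + s - k = m2 + r2
        then a p q * b r s * reord_coef \<theta> q r k else 0)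
      = (\<Sum>k\<le>min q r. if k = 0 then (if (p, q) = (m1, m2) \<and> (r, s) = (r1, r2)
        then a m1 m2 * b r1 r2 else 0) else 0)"
      by (intro sum.cong) auto
    then show ?thesis by (simp add: sum.delta)
  qed
  have "amul \<theta> a b (m1 + r1) (m2 + r2)
      = (\<Sum>x\<in>supp a. \<Sum>y\<in>supp b.
          if x = (m1, m2) \<and> y = (r1, r2) then a m1 m2 * b r1 r2 else 0)"
    unfolding amul_def
    by (intro sum.cong refl, clarsimp simp only: prod.case, intro sum.cong refl)
      (clarsimp simp only: prod.case term_eq)
  also have "\<dots> = (\<Sum>x\<in>supp a. if x = (m1, m2)
          then (\<Sum>y\<in>supp b. if y = (r1, r2) then a m1 m2 * b r1 r2 else 0) else 0)"
    by (intro sum.cong refl) simp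
  also have "\<dots> = a m1 m2 * b r1 r2"
    using assms(1,2) by (auto simp: is_elt_def supp_def)
  finally show ?thesis .
qed

lemma projector_diag_leading_coeff:
  assumes "is_projector \<theta> n P"
    and "\<forall>i<n. \<forall>j<n. supp (P i j) \<subseteq> {..(m1, m2)}" and "i < n"
  shows "P i i (m1 + m1) (m2 + m2) = of_real (\<Sum>l<n. (cmod (P l i m1 m2))\<^sup>2)"
proof -
  have elt: "\<And>i j. i < n \<Longrightarrow> j < n \<Longrightarrow> is_elt (P i j)"
    and idem: "\<And>i j. i < n \<Longrightarrow> j < n \<Longrightarrow>
      (\<lambda>m k. \<Sum>l<n. amul \<theta> (P i l) (P l j) m k) = P i j"
    and self_adj: "\<And>i j. i < n \<Longrightarrow> j < n \<Longrightarrow> astar \<theta> (P j i) = P i j"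
    using assms(1) unfolding is_projector_def by blast+
  have "P i i (m1 + m1) (m2 + m2) = (\<Sum>l<n. amul \<theta> (P i l) (P l i) (m1 + m1) (m2 + m2))"
    using fun_cong[OF fun_cong[OF idem[OF assms(3) assms(3)]], of "m1 + m1" "m2 + m2"] by simp
  also have "\<dots> = (\<Sum>l<n. P i l m1 m2 * P l i m1 m2)"
    using assms(2,3) by (intro sum.cong refl amul_leading_coeff elt) auto
  also have "\<dots> = (\<Sum>l<n. cnj (P l i m1 m2) * P l i m1 m2)"
  proof (intro sum.cong refl)
    fix l assume "l \<in> {..<n}"
    then have "P i l m1 m2 = astar \<theta> (P l i) m1 m2"
      using self_adj[of i l] assms(3) by simp
    also have "\<dots> = cnj (P l i m1 m2)"
      using assms(2,3) \<open>l \<in> {..<n}\<close> by (intro astar_leading_coeff elt) auto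
    finally show "P i l m1 m2 * P l i m1 m2 = cnj (P l i m1 m2) * P l i m1 m2" by simp
  qed
  also have "\<dots> = of_real (\<Sum>l<n. (cmod (P l i m1 m2))\<^sup>2)"
    by (simp add: complex_norm_square mult.commute del: of_real_power)
  finally show ?thesis .
qed

lemma projector_leading_exponent_eq_0:
  assumes "is_projector \<theta> n P"
    and "\<forall>i<n. \<forall>j<n. supp (P i j) \<subseteq> {..(m1, m2)}"
    and "l < n" "i < n" "P l i m1 m2 \<noteq> 0"
  shows "(m1, m2) = (0, 0)"
proof -
  have "(\<Sum>l<n. (cmod (P l i m1 m2))\<^sup>2) > 0"
    using assms(3,5) by (intro sum_pos2[of _ l]) auto
  then have "P i i (m1 + m1) (m2 + m2) \<noteq> 0"
    unfolding projector_diag_leading_coeff[OF assms(1,2,4)] of_real_eq_0_iff by linarith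
  then have "(m1 + m1, m2 + m2) \<in> supp (P i i)"
    by (simp add: supp_def)
  then have "(m1 + m1, m2 + m2) \<le> (m1, m2)"
    using assms(2,4) by blast
  then show ?thesis by auto
qed

lemma projector_supp_subset_origin:
  assumes "is_projector \<theta> n P" and "i < n" "j < n"
  shows "supp (P i j) \<subseteq> {(0, 0)}"
proof -
  define S where "S = (\<Union>i<n. \<Union>j<n. supp (P i j))"
  have "S \<subseteq> {(0, 0)}"
  proof (cases "S = {}")
    case False
    have "finite S"
      using assms(1) by (auto simp: S_def is_projector_def is_elt_def)
    obtain m1 m2 where max: "Max S = (m1, m2)" by fastforce
    have below: "\<forall>i<n. \<forall>j<n. supp (P i j) \<subseteq> {..(m1, m2)}"
      using Max_ge[OF \<open>finite S\<close>] by (auto simp: S_def simp flip: max)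
    have "(m1, m2) \<in> S"
      using Max_in[OF \<open>finite S\<close> False] max by simp
    then obtain l i where "l < n" "i < n" "(m1, m2) \<in> supp (P l i)"
      unfolding S_def by blast
    then have "(m1, m2) = (0, 0)"
      using projector_leading_exponent_eq_0[OF assms(1) below] by (simp add: supp_def)
    with max show ?thesis
      using Max_ge[OF \<open>finite S\<close>] by fastforce
  qed simp
  with assms(2,3) show ?thesis
    unfolding S_def by blast
qed

theorem theorem2p3:
  fixes \<theta> :: real and n :: nat and P :: "nat \<Rightarrow> nat \<Rightarrow> elt"
  assumes "\<theta> \<ge> 0"
    and "is_projector \<theta> n P"
  shows "\<forall>i<n. \<forall>j<n. \<exists>c. P i j = scalar c"
  using scalar_if_supp_subset projector_supp_subset_origin[OF assms(2)] by blast

end
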